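(* For integers $n\ge 1$ and $m$ with $1<m<\sqrt{2n}$, $E_m\!\left[\frac1\ell\right]<\frac{1}{E_{m-1}[\ell]}$.
   Context: $\mathbf X=\{X_1,\dots,X_n\}$ with the uniform measure. For $1\le m\le n$, $\mathcal X_m$ is the set of finite sequences $\chi=(\chi_1,\dots,\chi_\ell)$ of elements of $\mathbf X$ having exactly $m$ distinct entries and with $\chi_\ell$ different from all earlier entries; $\ell(\chi)$ is its length and $\chi$ has probability $n^{-\ell(\chi)}$. $E_m[f]=\sum_{\chi\in\mathcal X_m}f(\chi)\,n^{-\ell(\chi)}$; in particular $E_{m-1}[\ell]=\sum_{j=0}^{m-2}\frac n{n-j}$. *)

theory Defs
  imports "HOL-Analysis.Analysis"
begin

text \<open>The ground set X = {X_1,...,X_n} is modelled as {0..<n} (elements are nat below n).\<close>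

definition Xseq :: "nat \<Rightarrow> nat \<Rightarrow> nat list set" where
  "Xseq n m = {xs. xs \<noteq> [] \<and> set xs \<subseteq> {..<n} \<and> card (set xs) = m
                   \<and> last xs \<notin> set (butlast xs)}"

definition Eseq :: "nat \<Rightarrow> nat \<Rightarrow> (nat list \<Rightarrow> real) \<Rightarrow> real" where
  "Eseq n m f = (\<Sum>\<^sub>\<infinity>xs\<in>Xseq n m. f xs * (1 / real n) ^ length xs)"

end

theory Submission
  imports Defs "HOL-Library.Sublist"
begin

(* Think of an infinite sequence of independent uniform letters from {0..<n}.  For
   \<chi> \<in> X_m the weight n^-\<ell>(\<chi>) is the probability that the sequence starts with \<chi>,
   i.e. that the m-th distinct letter first appears at time \<ell>(\<chi>).

   (1) X_m is prefix-free, so Kraft's inequality (proved below by counting the extensions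
       of a fixed length) bounds the weight of every finite part of X_m by 1.  As \<ell> \<ge> m on
       X_m, this gives E_m[1/\<ell>] \<le> 1/m.
   (2) E_{k+1}[\<ell>] = \<Sum>_t P(\<ell> > t), and \<ell> > t forces the prefix of length t to contain at
       most k distinct letters.  Grouping by that prefix and using Kraft again bounds
       E_{k+1}[\<ell>] by \<Sum>_{j\<le>k} of the expected time during which exactly j letters have been
       seen; a recursion on the number of words with j distinct letters bounds the latter
       by n/(n-j).  Hence E_{k+1}[\<ell>] \<le> \<Sum>_{j\<le>k} n/(n-j).
   (3) Elementary estimate: \<Sum>_{j\<le>k} n/(n-j) < k+2 whenever (k+2)^2 < 2n.
   With m = k+2 this yields E_m[1/\<ell>] \<le> 1/m < 1/E_{m-1}[\<ell>].  The infinite sums are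
   controlled throughout by bounds on their finite partial sums. *)

definition words :: "nat \<Rightarrow> nat \<Rightarrow> nat list set" where
  "words n L = {xs. set xs \<subseteq> {..<n} \<and> length xs = L}"

lemma finite_words [simp]: "finite (words n L)"
  by (simp add: words_def finite_lists_length_eq)

lemma card_words: "card (words n L) = n ^ L"
  by (simp add: words_def card_lists_length_eq)

lemma card_extensions:
  assumes "set w \<subseteq> {..<n}" "length w \<le> N"
  shows "card {y \<in> words n N. prefix w y} = n ^ (N - length w)"
proof -
  have "{y \<in> words n N. prefix w y} = (\<lambda>z. w @ z) ` words n (N - length w)"
    using assms by (auto simp: words_def prefix_def)
  moreover have "inj_on (\<lambda>z. w @ z) (words n (N - length w))"
    by (simp add: inj_on_def)
  ultimately show ?thesis by (simp add: card_image card_words)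
qed

(* The length-N extensions of its members
   are pairwise disjoint and all extend w. *)
lemma kraft_inequality:
  assumes "n > 0" "finite G"
    and G_words: "\<And>x. x \<in> G \<Longrightarrow> set x \<subseteq> {..<n}"
    and G_prefix_free: "\<And>x y. x \<in> G \<Longrightarrow> y \<in> G \<Longrightarrow> prefix x y \<Longrightarrow> x = y"
    and G_extend: "\<And>x. x \<in> G \<Longrightarrow> prefix w x"
    and w_word: "set w \<subseteq> {..<n}"
  shows "(\<Sum>x\<in>G. (1 / real n) ^ length x) \<le> (1 / real n) ^ length w"
proof -
  define N where "N = Max (length ` insert w G)"
  have len_N: "length x \<le> N" if "x \<in> insert w G" for x
    using assms(2) that by (auto simp: N_def)
  define Ext where "Ext x = {y \<in> words n N. prefix x y}" for x
  have card_Ext: "card (Ext x) = n ^ (N - length x)" if "x \<in> insert w G" for x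
    unfolding Ext_def using that len_N G_words w_word by (intro card_extensions) auto
  have disjoint: "Ext x \<inter> Ext y = {}" if "x \<in> G" "y \<in> G" "x \<noteq> y" for x y
    using that G_prefix_free prefix_same_cases unfolding Ext_def by blast
  have "(\<Sum>x\<in>G. n ^ (N - length x)) = card (\<Union>x\<in>G. Ext x)"
    using assms(2) disjoint card_Ext by (subst card_UN_disjoint) (auto simp: Ext_def)
  also have "\<dots> \<le> card (Ext w)"
    using G_extend by (intro card_mono) (auto simp: Ext_def intro: prefix_order.trans)
  finally have nat_ineq: "(\<Sum>x\<in>G. n ^ (N - length x)) \<le> n ^ (N - length w)"
    using card_Ext by simp
  have weight: "(1 / real n) ^ length x = real n ^ (N - length x) / real n ^ N"
    if "x \<in> insert w G" for x
    using assms(1) len_N[OF that] by (simp add: power_diff power_one_over)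
  have "(\<Sum>x\<in>G. (1 / real n) ^ length x) = (\<Sum>x\<in>G. real n ^ (N - length x)) / real n ^ N"
    by (simp add: weight sum_divide_distrib)
  also have "\<dots> \<le> real n ^ (N - length w) / real n ^ N"
    using nat_ineq by (intro divide_right_mono) (simp_all flip: of_nat_power of_nat_sum)
  also have "\<dots> = (1 / real n) ^ length w"
    by (simp add: weight)
  finally show ?thesis .
qed

lemma sum_if_const:
  "finite A \<Longrightarrow> (\<Sum>x\<in>A. if P x then c else 0) = c * card {x \<in> A. P x}"
  by (simp add: sum.inter_filter[symmetric])

definition nwords :: "nat \<Rightarrow> nat \<Rightarrow> nat \<Rightarrow> nat" where
  "nwords n j L = card {w \<in> words n L. card (set w) = j}"

lemma card_words_snoc:
  "card {x \<in> words n (Suc L). P x} = (\<Sum>w\<in>words n L. card {c. c < n \<and> P (w @ [c])})"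
proof -
  let ?S = "SIGMA w:words n L. {c. c < n \<and> P (w @ [c])}"
  have "{x \<in> words n (Suc L). P x} = (\<lambda>(w, c). w @ [c]) ` ?S"
  proof (intro equalityI subsetI)
    fix x assume x: "x \<in> {x \<in> words n (Suc L). P x}"
    then have "x \<noteq> []"
      by (auto simp: words_def)
    then obtain w c where "x = w @ [c]"
      by (metis rev_exhaust)
    with x show "x \<in> (\<lambda>(w, c). w @ [c]) ` ?S"
      by (auto simp: words_def image_iff)
  qed (auto simp: words_def)
  moreover have "inj_on (\<lambda>(w, c). w @ [c]) ?S"
    by (auto simp: inj_on_def)
  ultimately show ?thesis
    by (simp add: card_image card_SigmaI)
qed

(* Appending a letter keeps the number of distinct letters (j choices) or raises it by
   one (n - (j-1) choices). *)
lemma nwords_Suc: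
  assumes "j \<ge> 1"
  shows "nwords n j (Suc L) = j * nwords n j L + (n - (j - 1)) * nwords n (j - 1) L"
proof -
  have letters: "card {c. c < n \<and> card (set (w @ [c])) = j} =
      (if card (set w) = j then j else 0) + (if card (set w) = j - 1 then n - (j - 1) else 0)"
    if "w \<in> words n L" for w
  proof -
    have w: "set w \<subseteq> {..<n}" using that by (simp add: words_def)
    have "{c. c < n \<and> card (set (w @ [c])) = j} =
        (if card (set w) = j then set w else {}) \<union>
        (if card (set w) = j - 1 then {..<n} - set w else {})"
      using w assms by (auto simp: card_insert_if)
    moreover have "card ({..<n} - set w) = n - card (set w)"
      using w by (simp add: card_Diff_subset)
    ultimately show ?thesis
      using assms by (simp add: card_Un_disjoint)
  qed
  have "nwords n j (Suc L) = (\<Sum>w\<in>words n L. (if card (set w) = j then j else 0)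
      + (if card (set w) = j - 1 then n - (j - 1) else 0))"
    unfolding nwords_def card_words_snoc by (rule sum.cong[OF refl letters])
  also have "\<dots> = j * nwords n j L + (n - (j - 1)) * nwords n (j - 1) L"
    unfolding sum.distrib sum_if_const[OF finite_words] nwords_def ..
  finally show ?thesis .
qed

lemma nwords_length_0: "nwords n j 0 = (if j = 0 then 1 else 0)"
proof -
  have "{w \<in> words n 0. card (set w) = j} = (if j = 0 then {[]} else {})"
    by (auto simp: words_def)
  then show ?thesis by (simp add: nwords_def)
qed

(* The expected number of times t < N at which exactly j distinct letters have been seen. *)
definition occupation :: "nat \<Rightarrow> nat \<Rightarrow> nat \<Rightarrow> real" where
  "occupation n j N = (\<Sum>L<N. real (nwords n j L) * (1 / real n) ^ L)"

lemma occupation_0: "occupation n 0 N \<le> 1"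
proof -
  have "{w \<in> words n L. card (set w) = 0} = (if L = 0 then {[]} else {})" for L
    by (auto simp: words_def)
  then have "real (nwords n 0 L) * (1 / real n) ^ L = (if L = 0 then 1 else 0)" for L
    by (simp add: nwords_def)
  then show ?thesis
    by (simp add: occupation_def)
qed

lemma occupation_Suc:
  assumes "j \<ge> 1"
  shows "occupation n j (Suc N) =
    (real j * occupation n j N + real (n - (j - 1)) * occupation n (j - 1) N) / real n"
proof -
  have "occupation n j (Suc N) = (\<Sum>L<N. real (nwords n j (Suc L)) * (1 / real n) ^ Suc L)"
    unfolding occupation_def sum.lessThan_Suc_shift using assms by (simp add: nwords_length_0)
  also have "\<dots> = (\<Sum>L<N. (real j * (real (nwords n j L) * (1 / real n) ^ L)
      + real (n - (j - 1)) * (real (nwords n (j - 1) L) * (1 / real n) ^ L)) / real n)"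
    unfolding nwords_Suc[OF assms] of_nat_add of_nat_mult by (simp add: algebra_simps add_divide_distrib)
  also have "\<dots> = (real j * occupation n j N + real (n - (j - 1)) * occupation n (j - 1) N) / real n"
    by (simp add: occupation_def sum_distrib_left sum.distrib flip: sum_divide_distrib)
  finally show ?thesis .
qed

(* The time spent with exactly j distinct letters is geometric with mean n/(n-j); the
   partial sums never exceed that mean. *)
lemma occupation_bound:
  assumes "j < n"
  shows "occupation n j N \<le> real n / (real n - real j)"
  using assms
proof (induction N arbitrary: j)
  case 0
  then show ?case by (simp add: occupation_def)
next
  case (Suc N)
  show ?case
  proof (cases "j = 0")
    case True
    then show ?thesis using Suc.prems occupation_0 by simp
  next
    case False
    then have j1: "j \<ge> 1" by simp
    define x where "x = real n - real j"
    have x: "x > 0" "real (n - (j - 1)) = x + 1" "real n - real (j - 1) = x + 1"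
      using Suc.prems False by (auto simp: x_def of_nat_diff)
    have IH: "occupation n j N \<le> real n / x" "occupation n (j - 1) N \<le> real n / (x + 1)"
      using Suc.prems Suc.IH[of j] Suc.IH[of "j - 1"] unfolding x(3) by (simp_all add: x_def)
    have "occupation n j (Suc N) \<le> (real j * (real n / x) + (x + 1) * (real n / (x + 1))) / real n"
      unfolding occupation_Suc[OF j1] x(2)
      using IH x by (intro divide_right_mono add_mono mult_left_mono) auto
    also have "\<dots> = real n / x"
    proof -
      have "(x + 1) * (real n / (x + 1)) = real n"
        using x(1) by simp
      moreover have "(real j * (real n / x) + real n) / real n = (real j + x) / x"
        using x(1) Suc.prems by (simp add: field_simps)
      ultimately show ?thesis
        by (simp add: x_def)
    qed
    finally show ?thesis by (simp add: x_def)
  qed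
qed

lemma Xseq_words: "x \<in> Xseq n m \<Longrightarrow> set x \<subseteq> {..<n}"
  by (simp add: Xseq_def)

lemma Xseq_length: "x \<in> Xseq n m \<Longrightarrow> m \<le> length x"
  using card_length[of x] by (auto simp: Xseq_def)

lemma card_set_butlast_Xseq:
  assumes "x \<in> Xseq n (Suc k)"
  shows "card (set (butlast x)) = k"
proof -
  have "x \<noteq> []"
    using assms by (simp add: Xseq_def)
  then have "set x = set (butlast x @ [last x])"
    by simp
  then have "set x = insert (last x) (set (butlast x))"
    by simp
  moreover have "card (set x) = Suc k" "last x \<notin> set (butlast x)"
    using assms by (simp_all add: Xseq_def)
  ultimately show ?thesis
    by simp
qed

(* X_m is prefix-free: a proper prefix of y \<in> X_m lies inside butlast y, which misses the
   letter last y, so it cannot already show m distinct letters. *)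
lemma Xseq_prefix_free:
  assumes "x \<in> Xseq n m" "y \<in> Xseq n m" "prefix x y"
  shows "x = y"
proof (rule ccontr)
  assume "x \<noteq> y"
  with assms(3) obtain z where y: "y = x @ z" "z \<noteq> []"
    by (auto simp: prefix_def)
  then have "set x \<subseteq> set (butlast y)"
    by (simp add: butlast_append)
  moreover have "set x = set y"
    using assms y by (intro card_subset_eq) (auto simp: Xseq_def)
  moreover have "last y \<in> set y" "last y \<notin> set (butlast y)"
    using assms(2) by (auto simp: Xseq_def)
  ultimately show False
    by auto
qed

lemma Xseq_take:
  assumes "x \<in> Xseq n (Suc k)" "t < length x"
  shows "take t x \<in> {w \<in> words n t. card (set w) \<le> k}"
proof -
  have "take t x = take t (butlast x)"
    using assms(2) by (simp add: butlast_conv_take)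
  then have "set (take t x) \<subseteq> set (butlast x)"
    by (simp add: set_take_subset)
  then have "card (set (take t x)) \<le> k"
    using card_mono[OF List.finite_set] card_set_butlast_Xseq[OF assms(1)] by metis
  moreover have "set (take t x) \<subseteq> {..<n}"
    using order.trans[OF set_take_subset Xseq_words[OF assms(1)]] .
  ultimately show ?thesis
    using assms(2) by (simp add: words_def)
qed

lemma Xseq_mass_prefix:
  assumes "n > 0" "finite F" "F \<subseteq> Xseq n m" "set w \<subseteq> {..<n}"
  shows "(\<Sum>x\<in>{x \<in> F. prefix w x}. (1 / real n) ^ length x) \<le> (1 / real n) ^ length w"
proof (rule kraft_inequality[OF assms(1)])
  show "set x \<subseteq> {..<n}" if "x \<in> {x \<in> F. prefix w x}" for x
    using that assms(3) Xseq_words by blast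
  show "x = y" if "x \<in> {x \<in> F. prefix w x}" "y \<in> {x \<in> F. prefix w x}" "prefix x y" for x y
    using that assms(3) Xseq_prefix_free by blast
qed (use assms(2,4) in simp_all)

lemma Xseq_mass:
  assumes "n > 0" "finite F" "F \<subseteq> Xseq n m"
  shows "(\<Sum>x\<in>F. (1 / real n) ^ length x) \<le> 1"
  using Xseq_mass_prefix[OF assms, of "[]"] by simp

(* P(\<ell> > t) \<le> P(the first t letters contain at most k distinct letters) on X_{k+1}: group the
   members longer than t by their prefix of length t and apply Kraft to each group. *)
lemma Xseq_mass_beyond:
  assumes "n > 0" "finite F" "F \<subseteq> Xseq n (Suc k)"
  shows "(\<Sum>x\<in>{x \<in> F. t < length x}. (1 / real n) ^ length x)
    \<le> real (card {w \<in> words n t. card (set w) \<le> k}) * (1 / real n) ^ t"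
proof -
  define A where "A = {x \<in> F. t < length x}"
  have A: "finite A" "A \<subseteq> Xseq n (Suc k)"
    using assms by (auto simp: A_def)
  have prefix_mass: "(\<Sum>x\<in>{x \<in> A. take t x = w}. (1 / real n) ^ length x) \<le> (1 / real n) ^ t"
    if w: "w \<in> take t ` A" for w
  proof -
    obtain y where y: "y \<in> A" "w = take t y"
      using w by blast
    have "{x \<in> A. take t x = w} = {x \<in> {x \<in> A. take t x = w}. prefix w x}"
      using take_is_prefix by fastforce
    moreover have "set w \<subseteq> {..<n}" "length w = t"
      using Xseq_take[of y n k t] y A by (auto simp: A_def words_def)
    ultimately show ?thesis
      using Xseq_mass_prefix[OF assms(1), of "{x \<in> A. take t x = w}" "Suc k" w] A by auto
  qed
  have "(\<Sum>x\<in>A. (1 / real n) ^ length x)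
      = (\<Sum>w\<in>take t ` A. \<Sum>x\<in>{x \<in> A. take t x = w}. (1 / real n) ^ length x)"
    using A(1) by (rule sum.image_gen)
  also have "\<dots> \<le> (\<Sum>w\<in>take t ` A. (1 / real n) ^ t)"
    using prefix_mass by (rule sum_mono)
  also have "\<dots> = real (card (take t ` A)) * (1 / real n) ^ t"
    by simp
  also have "\<dots> \<le> real (card {w \<in> words n t. card (set w) \<le> k}) * (1 / real n) ^ t"
  proof (intro mult_right_mono of_nat_mono card_mono)
    show "take t ` A \<subseteq> {w \<in> words n t. card (set w) \<le> k}"
      using A(2) Xseq_take by (auto simp: A_def)
    show "finite {w \<in> words n t. card (set w) \<le> k}"
      by (rule finite_subset[OF _ finite_words]) blast
    show "0 \<le> (1 / real n) ^ t"
      by simp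
  qed
  finally show ?thesis
    unfolding A_def .
qed

(* The tail-sum formula E[\<ell>] = \<Sum>_t P(\<ell> > t) on finite parts of X_{k+1}, combined with the
   previous bound and a split by the exact number of distinct letters. *)
lemma Xseq_length_sum:
  assumes "n > 0" "finite F" "F \<subseteq> Xseq n (Suc k)" "\<And>x. x \<in> F \<Longrightarrow> length x \<le> N"
  shows "(\<Sum>x\<in>F. real (length x) * (1 / real n) ^ length x) \<le> (\<Sum>j\<le>k. occupation n j N)"
proof -
  have lengths: "real (length x) = (\<Sum>t\<in>{t \<in> {..<N}. t < length x}. 1)" if "x \<in> F" for x
  proof -
    have "{t \<in> {..<N}. t < length x} = {..<length x}"
      using assms(4)[OF that] by auto
    then show ?thesis by simp
  qed
  have "(\<Sum>x\<in>F. real (length x) * (1 / real n) ^ length x)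
      = (\<Sum>x\<in>F. \<Sum>t\<in>{t \<in> {..<N}. t < length x}. (1 / real n) ^ length x)"
    by (intro sum.cong refl) (simp add: lengths)
  also have "\<dots> = (\<Sum>t<N. \<Sum>x\<in>{x \<in> F. t < length x}. (1 / real n) ^ length x)"
    using assms(2) by (rule sum.swap_restrict) simp
  also have "\<dots> \<le> (\<Sum>t<N. real (card {w \<in> words n t. card (set w) \<le> k}) * (1 / real n) ^ t)"
    using Xseq_mass_beyond[OF assms(1-3)] by (rule sum_mono)
  also have "\<dots> = (\<Sum>t<N. \<Sum>j\<le>k. real (nwords n j t) * (1 / real n) ^ t)"
  proof (intro sum.cong refl)
    fix t
    have "card {w \<in> words n t. card (set w) \<le> k} = (\<Sum>j\<le>k. nwords n j t)"
    proof -
      have "{w \<in> words n t. card (set w) \<le> k} = (\<Union>j\<le>k. {w \<in> words n t. card (set w) = j})"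
        by auto
      then show ?thesis
        unfolding nwords_def by (simp only:) (rule card_UN_disjoint, auto)
    qed
    then show "real (card {w \<in> words n t. card (set w) \<le> k}) * (1 / real n) ^ t
        = (\<Sum>j\<le>k. real (nwords n j t) * (1 / real n) ^ t)"
      by (simp add: sum_distrib_right)
  qed
  also have "\<dots> = (\<Sum>j\<le>k. occupation n j N)"
    unfolding occupation_def by (rule sum.swap)
  finally show ?thesis .
qed

lemma nonneg_infsum_le:
  fixes f :: "'a \<Rightarrow> real"
  assumes "\<And>x. x \<in> A \<Longrightarrow> 0 \<le> f x" "\<And>F. finite F \<Longrightarrow> F \<subseteq> A \<Longrightarrow> sum f F \<le> B"
  shows "f summable_on A" "infsum f A \<le> B"
proof -
  have "bdd_above (sum f ` {F. F \<subseteq> A \<and> finite F})"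
    using assms(2) by (intro bdd_aboveI2[where M = B]) auto
  then show summable: "f summable_on A"
    using assms(1) nonneg_bdd_above_summable_on by blast
  show "infsum f A \<le> B"
    using summable assms(2) by (rule infsum_le_finite_sums)
qed

(* The expected time needed to collect k+1 distinct letters (coupon collector). *)
definition collect_time :: "nat \<Rightarrow> nat \<Rightarrow> real" where
  "collect_time n k = (\<Sum>j\<le>k. real n / (real n - real j))"

lemma Eseq_length_le:
  assumes "k < n"
  shows "(\<lambda>x. real (length x) * (1 / real n) ^ length x) summable_on Xseq n (Suc k)"
    and "Eseq n (Suc k) (\<lambda>x. real (length x)) \<le> collect_time n k"
proof -
  have "(\<Sum>x\<in>F. real (length x) * (1 / real n) ^ length x) \<le> collect_time n k"
    if F: "finite F" "F \<subseteq> Xseq n (Suc k)" for F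
  proof -
    have "(\<Sum>x\<in>F. real (length x) * (1 / real n) ^ length x)
        \<le> (\<Sum>j\<le>k. occupation n j (Max (length ` F)))"
      using assms F by (intro Xseq_length_sum) auto
    also have "\<dots> \<le> collect_time n k"
      unfolding collect_time_def using assms by (intro sum_mono occupation_bound) auto
    finally show ?thesis .
  qed
  note bound = this
  show "(\<lambda>x. real (length x) * (1 / real n) ^ length x) summable_on Xseq n (Suc k)"
    by (rule nonneg_infsum_le(1)[OF _ bound]) simp
  show "Eseq n (Suc k) (\<lambda>x. real (length x)) \<le> collect_time n k"
    unfolding Eseq_def by (rule nonneg_infsum_le(2)[OF _ bound]) simp
qed

(* Part (1): E_{k+1}[1/\<ell>] \<le> 1/(k+1), since \<ell> \<ge> k+1 and the total weight is at most 1. *)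
lemma Eseq_inverse_length_le:
  assumes "n > 0"
  shows "Eseq n (Suc k) (\<lambda>x. 1 / real (length x)) \<le> 1 / real (Suc k)"
  unfolding Eseq_def
proof (rule nonneg_infsum_le(2))
  fix F assume F: "finite F" "F \<subseteq> Xseq n (Suc k)"
  have "(\<Sum>x\<in>F. 1 / real (length x) * (1 / real n) ^ length x)
      \<le> (\<Sum>x\<in>F. 1 / real (Suc k) * (1 / real n) ^ length x)"
  proof (intro sum_mono mult_right_mono)
    fix x assume "x \<in> F"
    then have "Suc k \<le> length x"
      using F Xseq_length by blast
    then show "1 / real (length x) \<le> 1 / real (Suc k)"
      by (intro divide_left_mono mult_pos_pos) auto
  qed simp
  also have "\<dots> = 1 / real (Suc k) * (\<Sum>x\<in>F. (1 / real n) ^ length x)"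
    by (simp only: sum_distrib_left)
  also have "\<dots> \<le> 1 / real (Suc k)"
    using Xseq_mass[OF assms F] by (rule mult_left_le) simp
  finally show "(\<Sum>x\<in>F. 1 / real (length x) * (1 / real n) ^ length x) \<le> 1 / real (Suc k)" .
qed simp

(* E_{k+1}[\<ell>] is positive: the word 0,1,...,k lies in X_{k+1}. *)
lemma Eseq_length_pos:
  assumes "k < n"
  shows "0 < Eseq n (Suc k) (\<lambda>x. real (length x))"
proof -
  let ?f = "\<lambda>x. real (length x) * (1 / real n) ^ length x"
  have witness: "[0..<Suc k] \<in> Xseq n (Suc k)"
    using assms by (auto simp: Xseq_def)
  have "0 < infsum ?f {[0..<Suc k]}"
    using assms by simp
  also have "\<dots> \<le> infsum ?f (Xseq n (Suc k))"
    using witness by (intro infsum_mono_neutral Eseq_length_le(1)[OF assms]) auto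
  finally show ?thesis
    unfolding Eseq_def .
qed

lemma square_bound_less:
  assumes "(real k + 2) ^ 2 < 2 * real n"
  shows "k < n"
proof -
  have "2 * real k < (real k + 2) ^ 2"
    by (simp add: power2_eq_square algebra_simps add_pos_nonneg)
  then show ?thesis
    using assms by simp
qed

(* Part (3): n/(n-j) = 1 + j/(n-j) \<le> 1 + j/(n-k), so the collection time is at most
   k + 1 + k(k+1)/(2(n-k)), which is < k+2 when (k+2)^2 < 2n. *)
lemma collect_time_lt:
  assumes "(real k + 2) ^ 2 < 2 * real n"
  shows "collect_time n k < real k + 2"
proof -
  have k_n: "real k * (real k + 1) < 2 * (real n - real k)"
    using assms by (simp add: power2_eq_square algebra_simps)
  have pos: "real n - real k > 0"
    using square_bound_less[OF assms] by simp
  have "collect_time n k \<le> (\<Sum>j\<le>k. 1 + real j / (real n - real k))"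
    unfolding collect_time_def
  proof (rule sum_mono)
    fix j assume "j \<in> {..k}"
    then have j: "real j \<le> real k" by simp
    then have "real n / (real n - real j) = 1 + real j / (real n - real j)"
      using pos by (simp add: field_simps)
    also have "\<dots> \<le> 1 + real j / (real n - real k)"
      using j pos by (simp add: frac_le)
    finally show "real n / (real n - real j) \<le> 1 + real j / (real n - real k)" .
  qed
  also have "\<dots> = (real k + 1) + real k * (real k + 1) / 2 / (real n - real k)"
  proof -
    have "(\<Sum>j\<le>k. real j) = real k * (real k + 1) / 2"
      by (induction k) (simp_all add: field_simps)
    moreover have "(\<Sum>j\<le>k. 1 + real j / (real n - real k))
        = real k + 1 + (\<Sum>j\<le>k. real j) / (real n - real k)"
      by (simp add: sum.distrib sum_divide_distrib)
    ultimately show ?thesis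
      by (simp only:)
  qed
  also have "\<dots> < real k + 2"
    using k_n pos by (simp add: field_simps)
  finally show ?thesis .
qed

theorem mainTheorem7:
  fixes n m :: nat
  assumes "n \<ge> 1" and "1 < m" and "real m < sqrt (2 * real n)"
  shows "Eseq n m (\<lambda>xs. 1 / real (length xs))
           < 1 / Eseq n (m - 1) (\<lambda>xs. real (length xs))"
proof -
  define k where "k = m - 2"
  have m: "m = Suc (Suc k)"
    using assms(2) by (simp add: k_def)
  have "real m ^ 2 < sqrt (2 * real n) ^ 2"
    using assms(3) by (intro power_strict_mono) auto
  then have m_sq: "(real k + 2) ^ 2 < 2 * real n"
    using m by (simp add: add.commute)
  then have "k < n"
    by (rule square_bound_less)
  define E where "E = Eseq n (Suc k) (\<lambda>xs. real (length xs))"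
  have "0 < E" "E < real m"
    using Eseq_length_pos[OF \<open>k < n\<close>] Eseq_length_le(2)[OF \<open>k < n\<close>] collect_time_lt[OF m_sq] m
    by (auto simp: E_def)
  then have "1 / real m < 1 / E"
    by (intro divide_strict_left_mono) auto
  moreover have "Eseq n m (\<lambda>xs. 1 / real (length xs)) \<le> 1 / real m"
    using Eseq_inverse_length_le[of n "Suc k"] assms(1) m by simp
  ultimately show ?thesis
    using m by (simp add: E_def)
qed

end
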